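(* Consider the DS-PSRL algorithm run on a parametrized MDP with scalar parameter satisfying the Lipschitz condition: there is $C$ with $\|P(\cdot\mid x,a,\theta)-P(\cdot\mid x,a,\theta')\|_1\le C|\theta-\theta'|$ for all $x,a$ and $\theta,\theta'\in\Theta\subseteq\mathbb{R}$, and whose differential value functions satisfy $h(x,\theta)\in[0,H]$. Let $m$ be the number of episodes up to time $T$, $M_j$ the number of steps in the $j$-th episode, and $\widetilde\theta_j$ the parameter sampled for episode $j$. Then \[ \mathbb{E}\Big[\sum_{t=1}^T\Delta_t\Big]\le CH\sqrt{T\,\mathbb{E}\Big[\sum_{j=1}^m M_j|\theta_*-\widetilde\theta_j|^2\Big]}. \]
   Context: Setting: parametrized MDP with state space $\mathcal{X}$, action space $\mathcal{A}$, known loss, known transition kernels $P(\cdot\mid x,a,\theta)$, unknown true parameter $\theta_*$ drawn from a known prior. $h(\cdot,\theta)$ is the differential value function of the average-cost Bellman optimality equation for parameter $\theta$. DS-PSRL: set $L=1$; at each $t$, if $t=L$ sample $\widetilde\theta_t$ from the current posterior and set $L\leftarrow2L$, else keep $\widetilde\theta_t=\widetilde\theta_{t-1}$; play the optimal action $a_t$ for parameter $\widetilde\theta_t$ at state $x_t$; observe $x_{t+1}\sim P(\cdot\mid x_t,a_t,\theta_* )$; update the posterior. An episode is a maximal run of steps with the same sampled parameter. With $h_t=h(\cdot,\widetilde\theta_t)$, define $\Delta_t=\int_{\mathcal{X}}\big(P(x\mid x_t,a_t,\theta_* )-P(x\mid x_t,a_t,\widetilde\theta_t)\big)h_t(x)\,dx$.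 *)

theory Defs
  imports "HOL-Probability.Probability"
begin

text \<open>Transition densities are written P y x a th = P(y | x, a, th), densities w.r.t.
  a reference measure mu on the state space.\<close>

definition Delta ::
  "'x measure \<Rightarrow> ('x \<Rightarrow> 'x \<Rightarrow> 'a \<Rightarrow> real \<Rightarrow> real) \<Rightarrow> ('x \<Rightarrow> real \<Rightarrow> real)
    \<Rightarrow> 'x \<Rightarrow> 'a \<Rightarrow> real \<Rightarrow> real \<Rightarrow> real" where
  "Delta mu P h x a thstar thtil =
     (\<integral>y. (P y x a thstar - P y x a thtil) * h y thtil \<partial>mu)"

definition sample_time :: "nat \<Rightarrow> bool" where
  "sample_time t \<longleftrightarrow> (\<exists>k. t = 2 ^ k)"

text \<open>Episode j (j \<ge> 1) consists of the times t with 2^(j-1) \<le> t < 2^j.\<close>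
definition num_episodes :: "nat \<Rightarrow> nat" where
  "num_episodes T = card {j::nat. 1 \<le> j \<and> 2 ^ (j - 1) \<le> T}"

definition episode_length :: "nat \<Rightarrow> nat \<Rightarrow> nat" where
  "episode_length T j = card {t \<in> {1..T}. 2 ^ (j - 1) \<le> t \<and> t < 2 ^ j}"

end

theory Submission
  imports Defs "HOL-Library.Log_Nat"
begin

(*
  By the Lipschitz condition and 0 \<le> h \<le> H, the gap at time t is at most
  C H |\<theta>* - \<theta>_t|, whatever action was played. Cauchy-Schwarz over t \<le> T bounds the sum of these by
  C H sqrt (T \<Sum>_t |\<theta>* - \<theta>_t|^2), and since the sampled parameter \<theta>_t is constant on each
  episode the inner sum equals \<Sum>_j M_j |\<theta>* - \<theta>_j|^2. Finally E sqrt X \<le> sqrt (E X), by the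
  nonnegativity of the variance of sqrt X. A negative Lipschitz constant forces every sampled
  parameter to be the true one, and then both sides vanish.
*)

lemma floorlog_2_eq_iff:
  assumes "0 < j"
  shows "floorlog 2 t = j \<longleftrightarrow> 2 ^ (j - 1) \<le> t \<and> t < 2 ^ j"
  using assms floorlog_le_iff[of 2 t j] floorlog_geI[of 2 j t] floorlog_geD[of j 2 t]
  by (auto simp: le_antisym)

lemma num_episodes_eq_floorlog: "num_episodes T = floorlog 2 T"
proof -
  have "{j::nat. 1 \<le> j \<and> 2 ^ (j - 1) \<le> T} = {1..floorlog 2 T}"
    using floorlog_geI[of 2 _ T] floorlog_geD[of _ 2 T] by auto
  then show ?thesis unfolding num_episodes_def by simp
qed

lemma episode_length_eq_card:
  assumes "0 < j"
  shows "episode_length T j = card {t \<in> {1..T}. floorlog 2 t = j}"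
  unfolding episode_length_def using floorlog_2_eq_iff[OF assms] by metis

lemma constant_on_episode:
  assumes step: "\<And>t. 1 \<le> t \<Longrightarrow> \<not> sample_time (Suc t) \<Longrightarrow> f (Suc t) = f t"
    and "2 ^ (j - 1) \<le> t" and "t < (2::nat) ^ j"
  shows "f t = f (2 ^ (j - 1))"
  using assms(2,3)
proof (induction t rule: dec_induct)
  case base
  show ?case by simp
next
  case (step n)
  have "\<not> sample_time (Suc n)"
  proof
    assume "sample_time (Suc n)"
    then obtain k where k: "Suc n = 2 ^ k" unfolding sample_time_def by blast
    with step have "(2::nat) ^ (j - 1) < 2 ^ k" "(2::nat) ^ k < 2 ^ j" by linarith+
    then show False by simp
  qed
  moreover have "1 \<le> n" using step.hyps(1) one_le_power[of 2] by (metis le_trans one_le_numeral)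
  ultimately show ?case using assms(1) step by simp
qed

lemma sum_over_episodes:
  fixes f :: "nat \<Rightarrow> real"
  assumes "\<And>t. 1 \<le> t \<Longrightarrow> \<not> sample_time (Suc t) \<Longrightarrow> f (Suc t) = f t"
  shows "(\<Sum>t=1..T. f t) = (\<Sum>j=1..num_episodes T. real (episode_length T j) * f (2 ^ (j - 1)))"
proof -
  have "floorlog 2 ` {1..T} \<subseteq> {1..floorlog 2 T}"
    by (auto simp: floorlog_mono Suc_le_eq floorlog_eq_zero_iff intro!: gr0I)
  then have "(\<Sum>t=1..T. f t) = (\<Sum>j=1..floorlog 2 T. \<Sum>t | t \<in> {1..T} \<and> floorlog 2 t = j. f t)"
    by (intro sum.group[symmetric]) auto
  also have "\<dots> = (\<Sum>j=1..floorlog 2 T. real (episode_length T j) * f (2 ^ (j - 1)))"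
  proof (rule sum.cong[OF refl])
    fix j assume "j \<in> {1..floorlog 2 T}"
    then have j: "0 < j" by simp
    have "(\<Sum>t | t \<in> {1..T} \<and> floorlog 2 t = j. f t) = (\<Sum>t | t \<in> {1..T} \<and> floorlog 2 t = j. f (2 ^ (j - 1)))"
      using constant_on_episode[of f j] assms floorlog_2_eq_iff[OF j] by (intro sum.cong) auto
    then show "(\<Sum>t | t \<in> {1..T} \<and> floorlog 2 t = j. f t) = real (episode_length T j) * f (2 ^ (j - 1))"
      by (simp add: episode_length_eq_card[OF j])
  qed
  finally show ?thesis by (simp add: num_episodes_eq_floorlog)
qed

lemma sum_le_mult_sqrt_card_sum_squares:
  fixes a g :: "'b \<Rightarrow> real"
  assumes bound: "\<And>i. i \<in> I \<Longrightarrow> g i \<le> c * \<bar>a i\<bar>" and c: "0 \<le> c"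
  shows "(\<Sum>i\<in>I. g i) \<le> c * sqrt (real (card I) * (\<Sum>i\<in>I. (a i)\<^sup>2))"
proof -
  have "(\<Sum>i\<in>I. 1 * \<bar>a i\<bar>)\<^sup>2 \<le> (\<Sum>i\<in>I. 1\<^sup>2) * (\<Sum>i\<in>I. \<bar>a i\<bar>\<^sup>2)"
    by (rule Cauchy_Schwarz_ineq_sum)
  then have "(\<Sum>i\<in>I. \<bar>a i\<bar>) \<le> sqrt (real (card I) * (\<Sum>i\<in>I. (a i)\<^sup>2))"
    by (intro real_le_rsqrt) simp
  moreover have "(\<Sum>i\<in>I. g i) \<le> c * (\<Sum>i\<in>I. \<bar>a i\<bar>)"
    using bound by (simp add: sum_distrib_left sum_mono)
  ultimately show ?thesis
    using c by (meson mult_left_mono order_trans)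
qed

lemma (in finite_measure) integrable_sqrt:
  assumes "integrable M f" and "\<And>x. x \<in> space M \<Longrightarrow> 0 \<le> f x"
  shows "integrable M (\<lambda>x. sqrt (f x))"
proof (rule Bochner_Integration.integrable_bound)
  show "integrable M (\<lambda>x. (1 + f x) / 2)"
    using assms(1) by auto
  show "(\<lambda>x. sqrt (f x)) \<in> borel_measurable M"
    using assms(1) by measurable
  show "AE x in M. norm (sqrt (f x)) \<le> norm ((1 + f x) / 2)"
  proof (rule AE_I2)
    fix x assume x: "x \<in> space M"
    have "0 \<le> (sqrt (f x) - 1)\<^sup>2" by simp
    with assms(2)[OF x] show "norm (sqrt (f x)) \<le> norm ((1 + f x) / 2)"
      by (simp add: power2_eq_square algebra_simps)
  qed
qed

lemma (in prob_space) integral_sqrt_le_sqrt_integral: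
  assumes f: "integrable M f" and nonneg: "\<And>x. x \<in> space M \<Longrightarrow> 0 \<le> f x"
  shows "(\<integral>x. sqrt (f x) \<partial>M) \<le> sqrt (\<integral>x. f x \<partial>M)"
proof -
  have square: "(\<integral>x. (sqrt (f x))\<^sup>2 \<partial>M) = (\<integral>x. f x \<partial>M)"
    using nonneg by (intro Bochner_Integration.integral_cong) auto
  have square_integrable: "integrable M (\<lambda>x. (sqrt (f x))\<^sup>2)"
    by (rule Bochner_Integration.integrable_cong[THEN iffD1, OF refl _ f]) (simp add: nonneg)
  have "0 \<le> variance (\<lambda>x. sqrt (f x))"
    by (rule variance_positive)
  also have "\<dots> = (\<integral>x. f x \<partial>M) - (\<integral>x. sqrt (f x) \<partial>M)\<^sup>2"
    using integrable_sqrt[OF f nonneg] square_integrable square by (simp add: variance_eq)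
  finally show ?thesis
    by (intro real_le_rsqrt) simp
qed

lemma (in prob_space) integral_le_mult_sqrt_integral:
  assumes g: "integrable M g" "\<And>x. x \<in> space M \<Longrightarrow> 0 \<le> g x"
    and c: "0 \<le> c" and bound: "\<And>x. x \<in> space M \<Longrightarrow> f x \<le> c * sqrt (g x)"
  shows "(\<integral>x. f x \<partial>M) \<le> c * sqrt (\<integral>x. g x \<partial>M)"
proof -
  have "(\<integral>x. f x \<partial>M) \<le> (\<integral>x. c * sqrt (g x) \<partial>M)"
    using integrable_sqrt[OF g] g(2) c bound by (intro integral_mono') auto
  also have "\<dots> \<le> c * sqrt (\<integral>x. g x \<partial>M)"
    using integral_sqrt_le_sqrt_integral[OF g] c by (simp add: mult_left_mono)
  finally show ?thesis .
qed

lemma Delta_le_L1_distance: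
  assumes "integrable mu (\<lambda>y. P y x a th)" and "integrable mu (\<lambda>y. P y x a th')"
    and h_bound: "\<And>y. y \<in> space mu \<Longrightarrow> \<bar>h y th'\<bar> \<le> H"
  shows "Delta mu P h x a th th' \<le> H * (\<integral>y. \<bar>P y x a th - P y x a th'\<bar> \<partial>mu)"
proof -
  have "Delta mu P h x a th th' \<le> (\<integral>y. H * \<bar>P y x a th - P y x a th'\<bar> \<partial>mu)"
    unfolding Delta_def
  proof (rule integral_mono')
    show "integrable mu (\<lambda>y. H * \<bar>P y x a th - P y x a th'\<bar>)"
      using assms(1,2) by auto
    fix y assume y: "y \<in> space mu"
    have "(P y x a th - P y x a th') * h y th' \<le> \<bar>P y x a th - P y x a th'\<bar> * \<bar>h y th'\<bar>"
      by (metis abs_ge_self abs_mult)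
    also have "\<dots> \<le> H * \<bar>P y x a th - P y x a th'\<bar>"
      using h_bound[OF y] by (metis abs_ge_zero mult.commute mult_right_mono)
    finally show "(P y x a th - P y x a th') * h y th' \<le> H * \<bar>P y x a th - P y x a th'\<bar>" .
    show "0 \<le> H * \<bar>P y x a th - P y x a th'\<bar>"
      using h_bound[OF y] abs_ge_zero order_trans by (metis mult_nonneg_nonneg)
  qed
  then show ?thesis by simp
qed

lemma Delta_le_Lipschitz:
  assumes "integrable mu (\<lambda>y. P y x a th)" and "integrable mu (\<lambda>y. P y x a th')"
    and "\<And>y. y \<in> space mu \<Longrightarrow> \<bar>h y th'\<bar> \<le> H" and "0 \<le> H"
    and "(\<integral>y. \<bar>P y x a th - P y x a th'\<bar> \<partial>mu) \<le> C * \<bar>th - th'\<bar>"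
  shows "Delta mu P h x a th th' \<le> C * H * \<bar>th - th'\<bar>"
proof -
  have "Delta mu P h x a th th' \<le> H * (\<integral>y. \<bar>P y x a th - P y x a th'\<bar> \<partial>mu)"
    using assms(1-3) by (rule Delta_le_L1_distance)
  also have "\<dots> \<le> H * (C * \<bar>th - th'\<bar>)"
    using assms(5,4) by (rule mult_left_mono)
  finally show ?thesis by (simp add: ac_simps)
qed

lemma Lipschitz_const_neg_imp_eq:
  fixes C :: real
  assumes "(\<integral>y. \<bar>P y - Q y\<bar> \<partial>mu) \<le> C * \<bar>th - th'\<bar>" and "C < 0"
  shows "th = th'"
proof -
  have "0 \<le> C * \<bar>th - th'\<bar>"
    using Bochner_Integration.integral_nonneg assms(1) by (rule order_trans) simp
  with \<open>C < 0\<close> show ?thesis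
    by (simp add: zero_le_mult_iff)
qed

theorem lemma3:
  fixes M :: "'w measure" and SX :: "'x measure" and mu :: "'x measure"
    and Act :: "'a set" and Theta :: "real set"
    and P :: "'x \<Rightarrow> 'x \<Rightarrow> 'a \<Rightarrow> real \<Rightarrow> real"
    and loss :: "'x \<Rightarrow> 'a \<Rightarrow> real"
    and h :: "'x \<Rightarrow> real \<Rightarrow> real" and J :: "real \<Rightarrow> real"
    and C H :: real and T :: nat
    and thstar :: "'w \<Rightarrow> real" and thtil :: "nat \<Rightarrow> 'w \<Rightarrow> real"
    and xs :: "nat \<Rightarrow> 'w \<Rightarrow> 'x" and acts :: "nat \<Rightarrow> 'w \<Rightarrow> 'a"
  assumes prob: "prob_space M"
    and mu_sets: "sets mu = sets SX"
    and dens_meas: "\<And>x a th. x \<in> space SX \<Longrightarrow> a \<in> Act \<Longrightarrow> th \<in> Theta \<Longrightarrow>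
                      (\<lambda>y. P y x a th) \<in> borel_measurable mu"
    and dens_nonneg: "\<And>y x a th. y \<in> space SX \<Longrightarrow> x \<in> space SX \<Longrightarrow> a \<in> Act \<Longrightarrow>
                      th \<in> Theta \<Longrightarrow> 0 \<le> P y x a th"
    and dens_int: "\<And>x a th. x \<in> space SX \<Longrightarrow> a \<in> Act \<Longrightarrow> th \<in> Theta \<Longrightarrow>
                      integrable mu (\<lambda>y. P y x a th)"
    and dens_one: "\<And>x a th. x \<in> space SX \<Longrightarrow> a \<in> Act \<Longrightarrow> th \<in> Theta \<Longrightarrow>
                      (\<integral>y. P y x a th \<partial>mu) = 1"
    and lipschitz: "\<And>x a th th'. x \<in> space SX \<Longrightarrow> a \<in> Act \<Longrightarrow> th \<in> Theta \<Longrightarrow>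
                      th' \<in> Theta \<Longrightarrow>
                      (\<integral>y. \<bar>P y x a th - P y x a th'\<bar> \<partial>mu) \<le> C * \<bar>th - th'\<bar>"
    and h_meas: "\<And>th. th \<in> Theta \<Longrightarrow> (\<lambda>y. h y th) \<in> borel_measurable SX"
    and h_range: "\<And>x th. x \<in> space SX \<Longrightarrow> th \<in> Theta \<Longrightarrow> 0 \<le> h x th \<and> h x th \<le> H"
    and bellman: "\<And>x th. x \<in> space SX \<Longrightarrow> th \<in> Theta \<Longrightarrow>
                      (\<exists>a\<in>Act. J th + h x th = loss x a + (\<integral>y. P y x a th * h y th \<partial>mu))
                    \<and> (\<forall>a\<in>Act. J th + h x th \<le> loss x a + (\<integral>y. P y x a th * h y th \<partial>mu))"
    and thstar_Theta: "\<And>w. w \<in> space M \<Longrightarrow> thstar w \<in> Theta"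
    and thtil_Theta: "\<And>t w. w \<in> space M \<Longrightarrow> thtil t w \<in> Theta"
    and xs_space: "\<And>t w. w \<in> space M \<Longrightarrow> xs t w \<in> space SX"
    and acts_Act: "\<And>t w. w \<in> space M \<Longrightarrow> acts t w \<in> Act"
    and greedy: "\<And>t w. w \<in> space M \<Longrightarrow> 1 \<le> t \<Longrightarrow>
                   J (thtil t w) + h (xs t w) (thtil t w)
                   = loss (xs t w) (acts t w)
                     + (\<integral>y. P y (xs t w) (acts t w) (thtil t w) * h y (thtil t w) \<partial>mu)"
    and schedule: "\<And>t w. w \<in> space M \<Longrightarrow> 1 \<le> t \<Longrightarrow> \<not> sample_time (Suc t) \<Longrightarrow>
                   thtil (Suc t) w = thtil t w"
    and Delta_meas: "\<And>t. (\<lambda>w. Delta mu P h (xs t w) (acts t w) (thstar w) (thtil t w))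
                          \<in> borel_measurable M"
    and rhs_int: "integrable M (\<lambda>w. \<Sum>j=1..num_episodes T.
                     real (episode_length T j) * \<bar>thstar w - thtil (2 ^ (j - 1)) w\<bar>\<^sup>2)"
  shows "(\<integral>w. (\<Sum>t=1..T. Delta mu P h (xs t w) (acts t w) (thstar w) (thtil t w)) \<partial>M)
         \<le> C * H * sqrt (real T * (\<integral>w. (\<Sum>j=1..num_episodes T.
                     real (episode_length T j) * \<bar>thstar w - thtil (2 ^ (j - 1)) w\<bar>\<^sup>2) \<partial>M))"
proof -
  interpret prob_space M by (rule prob)
  define S where "S w = (\<Sum>j=1..num_episodes T.
    real (episode_length T j) * \<bar>thstar w - thtil (2 ^ (j - 1)) w\<bar>\<^sup>2)" for w
  have S_eq: "S w = (\<Sum>t=1..T. (thstar w - thtil t w)\<^sup>2)" if w: "w \<in> space M" for w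
    using sum_over_episodes[of "\<lambda>t. (thstar w - thtil t w)\<^sup>2" T] schedule[OF w]
    unfolding S_def by simp
  show ?thesis
  proof (cases "0 \<le> C")
    case True
    obtain w0 where "w0 \<in> space M" using not_empty by blast
    then have H_nonneg: "0 \<le> H"
      using h_range[OF xs_space thstar_Theta] order_trans by blast
    have gap_bound: "Delta mu P h (xs t w) (acts t w) (thstar w) (thtil t w)
        \<le> C * H * \<bar>thstar w - thtil t w\<bar>" if w: "w \<in> space M" for t w
      using h_range[OF _ thtil_Theta[OF w]] H_nonneg w
      by (intro Delta_le_Lipschitz dens_int lipschitz xs_space acts_Act thstar_Theta thtil_Theta)
        (auto simp: sets_eq_imp_space_eq[OF mu_sets])
    have "(\<integral>w. (\<Sum>t=1..T. Delta mu P h (xs t w) (acts t w) (thstar w) (thtil t w)) \<partial>M)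
        \<le> C * H * sqrt (\<integral>w. real T * S w \<partial>M)"
    proof (rule integral_le_mult_sqrt_integral)
      show "integrable M (\<lambda>w. real T * S w)" "0 \<le> C * H"
        using rhs_int True H_nonneg by (simp_all add: S_def)
      show "0 \<le> real T * S w" for w
        unfolding S_def by (intro mult_nonneg_nonneg sum_nonneg) auto
      show "(\<Sum>t=1..T. Delta mu P h (xs t w) (acts t w) (thstar w) (thtil t w))
          \<le> C * H * sqrt (real T * S w)" if "w \<in> space M" for w
        using sum_le_mult_sqrt_card_sum_squares[of "{1..T}", OF gap_bound] S_eq that
          \<open>0 \<le> C * H\<close> by simp
    qed
    then show ?thesis by (simp add: S_def)
  next
    case False
    then have "thtil t w = thstar w" if w: "w \<in> space M" for t w
      using Lipschitz_const_neg_imp_eq[OF lipschitz[OF xs_space[where t=t, OF w] acts_Act[where t=t, OF w]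
          thstar_Theta[OF w] thtil_Theta[where t=t, OF w]]] by simp
    then show ?thesis
      by (simp add: S_def Delta_def cong: Bochner_Integration.integral_cong)
  qed
qed

end
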